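(* For all $w\in\mathcal W$, \[|w|^2_{H^1(\partial\widehat\Omega)}\lesssim p^2\,\widehat h^{-1}\,|w|^2_{H^{1/2}(\partial\widehat\Omega)}.\]
   Context: Single-patch parametric setting. $\widehat\Omega=(0,1)^2$, $p\ge1$. For $\delta=1,2$, $\Xi^{(\delta)}$ is a $p$-open knot vector on $[0,1]$ (end knots of multiplicity $p+1$, interior knots of multiplicity in $\{1,\dots,p\}$) with distinct breakpoints $\zeta^{(\delta)}_i$ satisfying $C_3\widehat h\le\zeta^{(\delta)}_{i+1}-\zeta^{(\delta)}_i\le\widehat h$. $\mathcal V=S[p,\Xi^{(1)}]\otimes S[p,\Xi^{(2)}]$ (tensor-product splines of degree $p$) and $\mathcal W=\{v|_{\partial\widehat\Omega}:v\in\mathcal V\}$. On $\partial\widehat\Omega$: $|w|_{H^1(\partial\widehat\Omega)}$ is the $L_2$ norm of the tangential derivative, $|w|^2_{H^{1/2}(\partial\widehat\Omega)}=\int_{\partial\widehat\Omega}\int_{\partial\widehat\Omega}\frac{|w(x)-w(y)|^2}{|x-y|^2}\,ds(x)\,ds(y)$, $\|w\|^2_{H^s}=\|w\|^2_{L_2}+|w|^2_{H^s}$. $a\lesssim b$ means $a\le cb$ with $c$ depending only on $C_3$ (and, where nested grids are used, on the constant $c_0$ below), not on $p$, $\widehat h$, $L$ or the knot vectors. *)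

theory Defs
  imports "HOL-Analysis.Analysis" "HOL-Computational_Algebra.Polynomial"
begin

text \<open>A p-open knot vector on [0,1] is encoded by its number N of elements, its
  distinct breakpoints zeta 0 = 0 < zeta 1 < ... < zeta N = 1 and the multiplicities
  m i of the interior breakpoints (end knots have multiplicity p+1).\<close>
definition open_knot_vector :: "nat \<Rightarrow> nat \<Rightarrow> (nat \<Rightarrow> real) \<Rightarrow> (nat \<Rightarrow> nat) \<Rightarrow> bool" where
  "open_knot_vector p N zeta m \<longleftrightarrow>
     N \<ge> 1 \<and> zeta 0 = 0 \<and> zeta N = 1 \<and> (\<forall>i<N. zeta i < zeta (Suc i)) \<and>
     (\<forall>i. 0 < i \<and> i < N \<longrightarrow> 1 \<le> m i \<and> m i \<le> p)"

definition spline_space :: "nat \<Rightarrow> nat \<Rightarrow> (nat \<Rightarrow> real) \<Rightarrow> (nat \<Rightarrow> nat) \<Rightarrow> (real \<Rightarrow> real) set" where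
  "spline_space p N zeta m = {f. \<exists>P :: nat \<Rightarrow> real poly.
      (\<forall>i<N. degree (P i) \<le> p \<and> (\<forall>x\<in>{zeta i..zeta (Suc i)}. f x = poly (P i) x)) \<and>
      (\<forall>i. 0 < i \<and> i < N \<longrightarrow>
         (\<forall>k \<le> p - m i. poly ((pderiv ^^ k) (P (i - 1))) (zeta i) = poly ((pderiv ^^ k) (P i)) (zeta i)))}"

definition tp_spline_space :: "nat \<Rightarrow> nat \<Rightarrow> (nat \<Rightarrow> real) \<Rightarrow> (nat \<Rightarrow> nat)
      \<Rightarrow> nat \<Rightarrow> (nat \<Rightarrow> real) \<Rightarrow> (nat \<Rightarrow> nat) \<Rightarrow> (real \<times> real \<Rightarrow> real) set" where
  "tp_spline_space p N1 z1 m1 N2 z2 m2 = {v. \<exists>(n::nat) f g.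
      (\<forall>k<n. f k \<in> spline_space p N1 z1 m1 \<and> g k \<in> spline_space p N2 z2 m2) \<and>
      (\<forall>x\<in>{0..1}. \<forall>y\<in>{0..1}. v (x, y) = (\<Sum>k<n. f k x * g k y))}"

definition edge :: "nat \<Rightarrow> real \<Rightarrow> real \<times> real" where
  "edge i t = (if i = 0 then (t, 0) else if i = 1 then (1, t) else if i = 2 then (1 - t, 1) else (0, 1 - t))"

definition bdry :: "(real \<times> real) set" where
  "bdry = (\<Union>i<4. edge i ` {0..1})"

definition trace_space :: "nat \<Rightarrow> nat \<Rightarrow> (nat \<Rightarrow> real) \<Rightarrow> (nat \<Rightarrow> nat)
      \<Rightarrow> nat \<Rightarrow> (nat \<Rightarrow> real) \<Rightarrow> (nat \<Rightarrow> nat) \<Rightarrow> (real \<times> real \<Rightarrow> real) set" where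
  "trace_space p N1 z1 m1 N2 z2 m2 =
     {w. \<exists>v\<in>tp_spline_space p N1 z1 m1 N2 z2 m2. \<forall>x\<in>bdry. w x = v x}"

definition H1_bdry_sq :: "(real \<times> real \<Rightarrow> real) \<Rightarrow> ennreal" where
  "H1_bdry_sq w = (\<Sum>i<4. \<integral>\<^sup>+ t. indicator {0..1} t * ennreal ((deriv (\<lambda>s. w (edge i s)) t)\<^sup>2) \<partial>lborel)"

definition H12_bdry_sq :: "(real \<times> real \<Rightarrow> real) \<Rightarrow> ennreal" where
  "H12_bdry_sq w = (\<Sum>i<4. \<Sum>j<4. \<integral>\<^sup>+ s. \<integral>\<^sup>+ t.
      indicator {0..1} s * indicator {0..1} t *
      ennreal ((w (edge i s) - w (edge j t))\<^sup>2 / (dist (edge i s) (edge j t))\<^sup>2) \<partial>lborel \<partial>lborel)"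

end

theory Submission
  imports Defs
begin

text \<open>On an element \<open>[a, b]\<close>, the difference quotient \<open>(R s - R t) / (s - t)\<close> of a polynomial
  \<open>R\<close> of degree \<open>p\<close> is, as a function of \<open>t\<close>, a polynomial of degree \<open>p - 1\<close> whose value at
  \<open>t = s\<close> is \<open>R'(s)\<close>. The Markov-type inequality \<open>q(x)\<^sup>2 \<le> 2 p\<^sup>2 / (b - a) \<integral>\<^sub>a\<^sup>b q\<^sup>2\<close> for such
  polynomials, obtained from the \<open>L\<^sub>2\<close> representer of point evaluation (a derivative of
  \<open>(x - c)\<^sup>n (x - d)\<^sup>n\<^sup>+\<^sup>1\<close>), therefore bounds \<open>R'(s)\<^sup>2\<close> by \<open>2 p\<^sup>2 / (b - a)\<close> times the
  Gagliardo integrand integrated over the element. The trace on each edge is a spline of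
  degree \<open>p\<close> with elements of length at least \<open>C\<^sub>3 h\<close>; integrating over \<open>s\<close> and summing over
  the elements bounds its \<open>H\<^sup>1\<close> seminorm by \<open>2 p\<^sup>2 / (C\<^sub>3 h)\<close> times the diagonal block of the
  \<open>H\<^sup>1\<^sup>/\<^sup>2\<close> double integral belonging to that edge.\<close>

lemma higher_pderiv_Suc: "(pderiv ^^ Suc k) p = (pderiv ^^ k) (pderiv p)"
  by (simp only: funpow_Suc_right comp_def)

lemma higher_pderiv_eq_0:
  fixes p :: "'a::{comm_semiring_1,semiring_no_zero_divisors,semiring_char_0} poly"
  shows "degree p < k \<Longrightarrow> (pderiv ^^ k) p = 0"
  by (intro poly_eqI) (simp add: coeff_higher_pderiv coeff_eq_0)

lemma linear_power_Suc_dvd_pderiv: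
  fixes F :: "'a::idom poly"
  assumes "[:-a,1:]^Suc m dvd F"
  shows "[:-a,1:]^m dvd pderiv F"
proof -
  obtain r where F: "F = [:-a,1:]^Suc m * r"
    using assms by (auto simp: dvd_def)
  have "[:-a,1:]^m dvd [:-a,1:]^Suc m * pderiv r"
    by (intro dvd_mult2 le_imp_power_dvd) auto
  moreover have "[:-a,1:]^m dvd smult (of_nat (Suc m)) (r * [:-a,1:]^m)"
    by (intro dvd_smult) simp
  ultimately show ?thesis
    unfolding F lemma_order_pderiv1 by (rule dvd_add)
qed

lemma linear_power_dvd_higher_pderiv:
  fixes F :: "'a::idom poly"
  assumes "[:-a,1:]^m dvd F" "j \<le> m"
  shows "[:-a,1:]^(m-j) dvd (pderiv ^^ j) F"
  using assms(2)
proof (induction j)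
  case (Suc j)
  then have "[:-a,1:]^Suc (m - Suc j) dvd (pderiv ^^ j) F"
    using Suc_diff_Suc by auto
  then show ?case by (simp add: linear_power_Suc_dvd_pderiv)
qed (use assms in simp)

lemma poly_higher_pderiv_at_multiple_root:
  fixes F :: "'a::idom poly"
  assumes "[:-a,1:]^m dvd F" "j < m"
  shows "poly ((pderiv ^^ j) F) a = 0"
proof -
  have "[:-a,1:] dvd [:-a,1:]^(m-j)"
    using assms(2) by (intro dvd_power) auto
  also have "\<dots> dvd (pderiv ^^ j) F"
    using linear_power_dvd_higher_pderiv[OF assms(1), of j] assms(2) by simp
  finally show ?thesis by (simp only: poly_eq_0_iff_dvd)
qed

lemma pderiv_linear_power_Suc_mult:
  fixes G :: "'a::{idom,semiring_char_0} poly"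
  shows "pderiv ([:-c,1:]^Suc k * G) = [:-c,1:]^k * (smult (of_nat (Suc k)) G + [:-c,1:] * pderiv G)"
  unfolding lemma_order_pderiv1
  by (simp add: ring_distribs mult_ac del: mult_pCons_left mult_pCons_right power_Suc of_nat_Suc)
     (rule disjI2, rule power_Suc)

lemma poly_higher_pderiv_linear_power_mult:
  fixes G :: "'a::{idom,semiring_char_0} poly"
  shows "poly ((pderiv ^^ k) ([:-c,1:]^k * G)) c = fact k * poly G c"
proof (induction k arbitrary: G)
  case (Suc k)
  have "poly ((pderiv ^^ Suc k) ([:-c,1:]^Suc k * G)) c
     = poly ((pderiv ^^ k) ([:-c,1:]^k * (smult (of_nat (Suc k)) G + [:-c,1:] * pderiv G))) c"
    unfolding higher_pderiv_Suc pderiv_linear_power_Suc_mult ..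
  also have "\<dots> = fact k * (of_nat (Suc k) * poly G c)" using Suc by simp
  finally show ?case by (simp add: algebra_simps)
qed simp

lemma poly_higher_pderiv_Suc_linear_power_mult:
  fixes G :: "'a::{idom,semiring_char_0} poly"
  shows "poly ((pderiv ^^ Suc k) ([:-c,1:]^k * G)) c = fact (Suc k) * poly (pderiv G) c"
proof (induction k arbitrary: G)
  case (Suc k)
  have "poly ((pderiv ^^ Suc (Suc k)) ([:-c,1:]^Suc k * G)) c
     = poly ((pderiv ^^ Suc k) ([:-c,1:]^k * (smult (of_nat (Suc k)) G + [:-c,1:] * pderiv G))) c"
    unfolding higher_pderiv_Suc[of "Suc k"] pderiv_linear_power_Suc_mult ..
  also have "\<dots> = fact (Suc k) * poly (pderiv (smult (of_nat (Suc k)) G + [:-c,1:] * pderiv G)) c"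
    using Suc by simp
  also have "poly (pderiv (smult (of_nat (Suc k)) G + [:-c,1:] * pderiv G)) c
      = of_nat (Suc (Suc k)) * poly (pderiv G) c"
    by (simp add: pderiv_add pderiv_smult pderiv_mult pderiv_pCons algebra_simps
        del: mult_pCons_left mult_pCons_right)
  finally show ?case by (simp add: algebra_simps)
qed simp

lemma integral_poly_pderiv:
  fixes f :: "real poly"
  assumes "a \<le> b"
  shows "integral {a..b} (poly (pderiv f)) = poly f b - poly f a"
proof (rule integral_unique, rule fundamental_theorem_of_calculus[OF assms])
  show "\<And>x. (poly f has_vector_derivative poly (pderiv f) x) (at x within {a..b})"
    by (simp add: has_real_derivative_iff_has_vector_derivative[symmetric]
        has_field_derivative_at_within[OF poly_DERIV])
qed

lemma integral_poly_mult_pderiv: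
  fixes f g :: "real poly"
  assumes "a \<le> b"
  shows "integral {a..b} (\<lambda>x. poly f x * poly (pderiv g) x) =
     poly (f*g) b - poly (f*g) a - integral {a..b} (\<lambda>x. poly (pderiv f) x * poly g x)"
proof -
  have "poly (pderiv (f*g)) = (\<lambda>x. poly f x * poly (pderiv g) x + poly (pderiv f) x * poly g x)"
    by (auto simp: pderiv_mult algebra_simps)
  then have "integral {a..b} (poly (pderiv (f*g))) =
     integral {a..b} (\<lambda>x. poly f x * poly (pderiv g) x) + integral {a..b} (\<lambda>x. poly (pderiv f) x * poly g x)"
    by (simp only:) (intro integral_add integrable_continuous_interval continuous_intros)
  then show ?thesis
    using integral_poly_pderiv[OF assms, of "f*g"] by simp
qed

lemma integral_poly_mult_higher_pderiv:
  fixes F q :: "real poly"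
  assumes "a \<le> b"
    and "\<And>j. j < k \<Longrightarrow> poly ((pderiv ^^ j) F) a = 0 \<and> poly ((pderiv ^^ j) F) b = 0"
  shows "integral {a..b} (\<lambda>x. poly q x * poly ((pderiv ^^ k) F) x) =
     (-1)^k * integral {a..b} (\<lambda>x. poly ((pderiv ^^ k) q) x * poly F x)"
  using assms(2)
proof (induction k arbitrary: q)
  case (Suc k)
  have "integral {a..b} (\<lambda>x. poly q x * poly ((pderiv ^^ Suc k) F) x)
     = - integral {a..b} (\<lambda>x. poly (pderiv q) x * poly ((pderiv ^^ k) F) x)"
    using integral_poly_mult_pderiv[OF assms(1), of q "(pderiv ^^ k) F"] Suc.prems by simp
  also have "\<dots> = - ((-1)^k * integral {a..b} (\<lambda>x. poly ((pderiv ^^ k) (pderiv q)) x * poly F x))"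
    using Suc by simp
  finally show ?case by (simp add: higher_pderiv_Suc funpow_swap1)
qed simp

text \<open>Up to normalisation, the derivative of this kernel represents evaluation at the
  endpoint \<open>c\<close> of the interval with endpoints \<open>c, d\<close> on polynomials of degree \<open>\<le> n\<close>
  with respect to the \<open>L\<^sub>2\<close> inner product (a Rodrigues-type formula).\<close>
definition eval_kernel :: "nat \<Rightarrow> real \<Rightarrow> real \<Rightarrow> real poly" where
  "eval_kernel n c d = (pderiv ^^ n) ([:-c,1:]^n * [:-d,1:]^Suc n)"

lemma poly_eval_kernel_left: "poly (eval_kernel n c d) c = fact n * (c - d)^Suc n"
  unfolding eval_kernel_def poly_higher_pderiv_linear_power_mult
  by (simp add: left_diff_distrib)

lemma poly_pderiv_eval_kernel_left:
  fixes c d :: real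
  shows "poly (pderiv (eval_kernel n c d)) c = fact (Suc n) * (Suc n * (c - d)^n)"
proof -
  have "poly (pderiv (eval_kernel n c d)) c = fact (Suc n) * poly (pderiv ([:-d,1:]^(Suc n))) c"
    unfolding eval_kernel_def funpow_swap1 higher_pderiv_Suc[symmetric]
    by (rule poly_higher_pderiv_Suc_linear_power_mult)
  then show ?thesis
    unfolding pderiv_power_Suc by (simp add: pderiv_pCons)
qed

lemma poly_higher_pderiv_kernel_generator:
  fixes c d :: real
  assumes "j < n"
  shows "poly ((pderiv ^^ j) ([:-c,1:]^n * [:-d,1:]^Suc n)) c = 0"
    and "poly ((pderiv ^^ j) ([:-c,1:]^n * [:-d,1:]^Suc n)) d = 0"
proof -
  have "[:-c,1:]^n dvd [:-c,1:]^n * [:-d,1:]^Suc n" "[:-d,1:]^Suc n dvd [:-c,1:]^n * [:-d,1:]^Suc n"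
    by (rule dvd_triv_left, rule dvd_triv_right)
  then show "poly ((pderiv ^^ j) ([:-c,1:]^n * [:-d,1:]^Suc n)) c = 0"
    and "poly ((pderiv ^^ j) ([:-c,1:]^n * [:-d,1:]^Suc n)) d = 0"
    using assms less_SucI[OF assms] by (blast intro: poly_higher_pderiv_at_multiple_root)+
qed

lemma poly_eval_kernel_right: "poly (eval_kernel n c d) d = 0"
  unfolding eval_kernel_def
  by (rule poly_higher_pderiv_at_multiple_root[OF dvd_triv_right]) simp

lemma degree_eval_kernel: "degree (eval_kernel n c d) = Suc n"
  unfolding eval_kernel_def degree_higher_pderiv
  by (subst degree_mult_eq) (simp_all add: degree_linear_power del: power_Suc)

lemma integral_pderiv_mult_eval_kernel:
  assumes "a \<le> b" "{c,d} = {a,b}" "degree (q::real poly) \<le> n"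
  shows "integral {a..b} (\<lambda>x. poly (pderiv q) x * poly (eval_kernel n c d) x) = 0"
proof -
  have "(pderiv ^^ n) (pderiv q) = 0"
    using assms(3) by (simp add: higher_pderiv_Suc[symmetric] higher_pderiv_eq_0 del: funpow.simps)
  moreover have "poly ((pderiv ^^ j) ([:-c,1:]^n * [:-d,1:]^Suc n)) a = 0 \<and>
      poly ((pderiv ^^ j) ([:-c,1:]^n * [:-d,1:]^Suc n)) b = 0" if "j < n" for j
    using poly_higher_pderiv_kernel_generator[OF that, of c d] assms(2)
    by (metis doubleton_eq_iff)
  ultimately show ?thesis
    unfolding eval_kernel_def
    by (simp add: integral_poly_mult_higher_pderiv[OF assms(1)])
qed

lemma poly_eval_representer:
  assumes ab: "a < b" and c: "c = a \<or> c = b"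
  obtains \<phi> :: "real poly" where "degree \<phi> \<le> n" and "poly \<phi> c = real (Suc n)^2 / (b - a)"
    and "\<And>r. degree r \<le> n \<Longrightarrow> integral {a..b} (\<lambda>x. poly r x * poly \<phi> x) = poly r c"
proof
  define d where "d = (if c = a then b else a)"
  have cd: "{c,d} = {a,b}" "c - d \<noteq> 0"
    using c ab by (auto simp: d_def)
  define \<psi> where "\<psi> = smult (1 / (fact n * (c - d)^Suc n)) (eval_kernel n c d)"
  define \<sigma> :: real where "\<sigma> = (if c = a then -1 else 1)"
  define \<phi> where "\<phi> = smult \<sigma> (pderiv \<psi>)"
  have \<psi>_c: "poly \<psi> c = 1" and \<psi>_d: "poly \<psi> d = 0"
    using cd by (simp_all add: \<psi>_def poly_eval_kernel_left poly_eval_kernel_right)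
  have "poly (pderiv \<psi>) c = real (Suc n)^2 / (c - d)"
    using cd by (simp add: \<psi>_def pderiv_smult poly_pderiv_eval_kernel_left field_simps power2_eq_square)
  then show "poly \<phi> c = real (Suc n)^2 / (b - a)"
    using c ab by (auto simp: \<phi>_def \<sigma>_def d_def field_simps)
  show "degree \<phi> \<le> n"
    by (simp add: \<phi>_def \<psi>_def degree_pderiv degree_eval_kernel)
  fix r :: "real poly"
  assume r: "degree r \<le> n"
  have "integral {a..b} (\<lambda>x. poly (pderiv r) x * poly \<psi> x) = 0"
    using integral_pderiv_mult_eval_kernel[OF _ cd(1) r] ab
    by (simp add: \<psi>_def integral_mult_right mult.left_commute)
  then have "integral {a..b} (\<lambda>x. poly r x * poly \<phi> x) = \<sigma> * (poly (r*\<psi>) b - poly (r*\<psi>) a)"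
    using integral_poly_mult_pderiv[of a b r \<psi>] ab
    by (simp add: \<phi>_def integral_mult_right mult.left_commute)
  also have "\<dots> = poly r c"
    using c ab \<psi>_c \<psi>_d by (auto simp: \<sigma>_def d_def)
  finally show "integral {a..b} (\<lambda>x. poly r x * poly \<phi> x) = poly r c" .
qed

lemma poly_sq_le_by_representer:
  fixes \<phi> q :: "real poly"
  assumes \<phi>: "degree \<phi> \<le> n" "poly \<phi> c > 0"
    and repr: "\<And>r. degree r \<le> n \<Longrightarrow> integral {a..b} (\<lambda>x. poly r x * poly \<phi> x) = poly r c"
    and q: "degree q \<le> n"
  shows "(poly q c)^2 \<le> poly \<phi> c * integral {a..b} (\<lambda>x. (poly q x)^2)"
proof -
  define P Q A where "P = poly \<phi> c" and "Q = poly q c" and "A = integral {a..b} (\<lambda>x. (poly q x)^2)"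
  have has_integral: "((\<lambda>x. poly F x * poly G x) has_integral
      integral {a..b} (\<lambda>x. poly F x * poly G x)) {a..b}" for F G :: "real poly"
    by (intro integrable_integral integrable_continuous_interval continuous_intros)
  have "((\<lambda>x. Q^2 * (poly \<phi> x * poly \<phi> x) - 2 * Q * P * (poly q x * poly \<phi> x)
      + P^2 * (poly q x * poly q x)) has_integral (Q^2 * P - 2 * Q * P * Q + P^2 * A)) {a..b}"
    using has_integral[of \<phi> \<phi>] has_integral[of q \<phi>] has_integral[of q q] repr[OF \<phi>(1)] repr[OF q]
    by (intro has_integral_add has_integral_diff has_integral_mult_right)
       (simp_all add: P_def Q_def A_def power2_eq_square)
  then have "0 \<le> Q^2 * P - 2 * Q * P * Q + P^2 * A"
  proof (rule has_integral_nonneg)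
    fix x
    have "0 \<le> (Q * poly \<phi> x - P * poly q x)^2" by simp
    then show "0 \<le> Q^2 * (poly \<phi> x * poly \<phi> x) - 2 * Q * P * (poly q x * poly \<phi> x)
      + P^2 * (poly q x * poly q x)"
      by (simp add: power2_eq_square algebra_simps)
  qed
  then have "Q^2 \<le> P * A"
    using \<phi>(2) by (simp add: P_def power2_eq_square algebra_simps)
  then show ?thesis by (simp add: P_def Q_def A_def)
qed

lemma poly_endpoint_sq_le:
  fixes q :: "real poly"
  assumes "a < b" "c = a \<or> c = b" "degree q \<le> n"
  shows "(poly q c)^2 \<le> real (Suc n)^2 / (b - a) * integral {a..b} (\<lambda>x. (poly q x)^2)"
proof -
  obtain \<phi> where \<phi>: "degree \<phi> \<le> n" "poly \<phi> c = real (Suc n)^2 / (b - a)"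
    "\<And>r. degree r \<le> n \<Longrightarrow> integral {a..b} (\<lambda>x. poly r x * poly \<phi> x) = poly r c"
    using poly_eval_representer[OF assms(1,2), where n = n] by blast
  have "poly \<phi> c > 0"
    using \<phi>(2) assms(1) by simp
  from poly_sq_le_by_representer[OF \<phi>(1) this \<phi>(3) assms(3)] show ?thesis
    unfolding \<phi>(2) .
qed

text \<open>An interior point is an endpoint of a subinterval of at least half the length.\<close>
lemma poly_sq_le_integral:
  fixes q :: "real poly"
  assumes ab: "a < b" and x: "x \<in> {a..b}" and q: "degree q \<le> n"
  shows "(poly q x)^2 \<le> 2 * real (Suc n)^2 / (b - a) * integral {a..b} (\<lambda>x. (poly q x)^2)"
proof -
  have sub: "integral {u..v} (\<lambda>x. (poly q x)^2) \<le> integral {a..b} (\<lambda>x. (poly q x)^2)"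
    if "{u..v} \<subseteq> {a..b}" for u v
    using that by (intro integral_subset_le integrable_continuous_interval continuous_intros) auto
  have half: "real (Suc n)^2 / (v - u) \<le> 2 * real (Suc n)^2 / (b - a)" if "b - a \<le> 2 * (v - u)" "u < v" for u v
  proof -
    have "real (Suc n)^2 / (v - u) \<le> real (Suc n)^2 / ((b - a) / 2)"
      using that ab by (intro divide_left_mono) auto
    then show ?thesis by (simp add: mult.commute)
  qed
  have I0: "0 \<le> integral {u..v} (\<lambda>x. (poly q x)^2)" for u v
    by (intro integral_nonneg integrable_continuous_interval continuous_intros) simp
  show ?thesis
  proof (cases "b - a \<le> 2 * (x - a)")
    case True
    then have "a < x" using ab by simp
    then have "(poly q x)^2 \<le> real (Suc n)^2 / (x - a) * integral {a..x} (\<lambda>x. (poly q x)^2)"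
      using poly_endpoint_sq_le[OF _ _ q] by simp
    also have "\<dots> \<le> 2 * real (Suc n)^2 / (b - a) * integral {a..b} (\<lambda>x. (poly q x)^2)"
      using True \<open>a < x\<close> x by (intro mult_mono[OF half sub _ I0]) auto
    finally show ?thesis .
  next
    case False
    then have "x < b" "b - a \<le> 2 * (b - x)" using ab x by auto
    then have "(poly q x)^2 \<le> real (Suc n)^2 / (b - x) * integral {x..b} (\<lambda>x. (poly q x)^2)"
      using poly_endpoint_sq_le[OF _ _ q] by simp
    also have "\<dots> \<le> 2 * real (Suc n)^2 / (b - a) * integral {a..b} (\<lambda>x. (poly q x)^2)"
      using \<open>x < b\<close> \<open>b - a \<le> 2 * (b - x)\<close> x by (intro mult_mono[OF half sub _ I0]) auto
    finally show ?thesis .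
  qed
qed

lemma poly_synthetic_div_difference_quotient:
  fixes R :: "'a::field poly"
  assumes "t \<noteq> s"
  shows "poly (synthetic_div R s) t = (poly R s - poly R t) / (s - t)"
proof -
  have "poly R t = (t - s) * poly (synthetic_div R s) t + poly R s"
    by (subst synthetic_div_correct'[of s R, symmetric]) (simp add: left_diff_distrib)
  with assms show ?thesis
    by (simp add: field_simps)
qed

lemma poly_synthetic_div_self:
  fixes R :: "'a::idom poly"
  shows "poly (synthetic_div R s) s = poly (pderiv R) s"
proof -
  have "pderiv R = [:-s,1:] * pderiv (synthetic_div R s) + synthetic_div R s * pderiv [:-s,1:]"
    by (subst synthetic_div_correct'[of s R, symmetric])
       (simp only: pderiv_add pderiv_mult pderiv_pCons pderiv_0, simp)
  then show ?thesis by (simp add: pderiv_pCons)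
qed

lemma nn_integral_difference_quotient_sq:
  fixes R :: "real poly"
  assumes "\<forall>t\<in>{a..b}. v t = poly R t" "s \<in> {a..b}"
  shows "(\<integral>\<^sup>+ t. indicator {a..b} t * ennreal ((v s - v t)^2 / (s - t)^2) \<partial>lborel)
    = ennreal (integral {a..b} (\<lambda>t. (poly (synthetic_div R s) t)^2))"
proof -
  have "(\<integral>\<^sup>+ t. indicator {a..b} t * ennreal ((v s - v t)^2 / (s - t)^2) \<partial>lborel)
     = (\<integral>\<^sup>+ t. ennreal (indicator {a..b} t * (poly (synthetic_div R s) t)^2) \<partial>lborel)"
    using AE_lborel_singleton[of s]
  proof (intro nn_integral_cong_AE, eventually_elim)
    case (elim t)
    then show ?case
      using assms poly_synthetic_div_difference_quotient[of t s R]
      by (cases "t \<in> {a..b}") (simp_all add: power_divide)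
  qed
  also have "\<dots> = ennreal (integral {a..b} (\<lambda>t. (poly (synthetic_div R s) t)^2))"
    by (intro nn_integral_has_integral_lebesgue integrable_integral integrable_continuous_interval
        continuous_intros) simp
  finally show ?thesis .
qed

text \<open>The difference quotient of \<open>R\<close> at \<open>s\<close> is a polynomial of degree \<open>p - 1\<close> taking the
  value \<open>R'(s)\<close> at \<open>s\<close>, so the polynomial inverse estimate applies to it.\<close>
lemma pderiv_sq_le_difference_quotient_integral:
  fixes R :: "real poly"
  assumes ab: "a < b" and s: "s \<in> {a..b}" and R: "degree R \<le> p" "1 \<le> p"
    and v: "\<forall>t\<in>{a..b}. v t = poly R t"
  shows "ennreal ((poly (pderiv R) s)^2) \<le> ennreal (2 * real p^2 / (b - a)) *
     (\<integral>\<^sup>+ t. indicator {a..b} t * ennreal ((v s - v t)^2 / (s - t)^2) \<partial>lborel)"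
proof -
  define Q where "Q = synthetic_div R s"
  have "degree Q \<le> p - 1"
    using R by (simp add: Q_def degree_synthetic_div)
  then have "(poly Q s)^2 \<le> 2 * real (Suc (p - 1))^2 / (b - a) * integral {a..b} (\<lambda>t. (poly Q t)^2)"
    by (rule poly_sq_le_integral[OF ab s])
  moreover have "0 \<le> integral {a..b} (\<lambda>t. (poly Q t)^2)"
    by (intro integral_nonneg integrable_continuous_interval continuous_intros) simp
  ultimately show ?thesis
    using R ab
    by (simp add: nn_integral_difference_quotient_sq[OF v s] ennreal_mult[symmetric]
        Q_def poly_synthetic_div_self)
qed

lemma borel_measurable_poly [measurable]: "poly (p :: real poly) \<in> borel_measurable borel"
  by (intro borel_measurable_continuous_onI continuous_intros)

lemma nn_integral_pderiv_sq_le_cell: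
  fixes R :: "real poly"
  assumes ab: "a < b" "l \<le> b - a" "0 < l" and R: "degree R \<le> p" "1 \<le> p"
    and v: "\<forall>t\<in>{a..b}. v t = poly R t" and v_measurable [measurable]: "v \<in> borel_measurable borel"
  shows "(\<integral>\<^sup>+ s. indicator {a<..<b} s * ennreal ((poly (pderiv R) s)^2) \<partial>lborel) \<le>
    ennreal (2 * real p^2 / l) * (\<integral>\<^sup>+ s. indicator {a<..<b} s *
      (\<integral>\<^sup>+ t. indicator {a..b} t * ennreal ((v s - v t)^2 / (s - t)^2) \<partial>lborel) \<partial>lborel)"
proof -
  have l: "ennreal (2 * real p^2 / (b - a)) \<le> ennreal (2 * real p^2 / l)"
    using ab by (intro ennreal_leI divide_left_mono) auto
  have "indicator {a<..<b} s * ennreal ((poly (pderiv R) s)^2) \<le> ennreal (2 * real p^2 / l) *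
      (indicator {a<..<b} s * (\<integral>\<^sup>+ t. indicator {a..b} t * ennreal ((v s - v t)^2 / (s - t)^2) \<partial>lborel))"
    for s
    using order_trans[OF pderiv_sq_le_difference_quotient_integral[OF ab(1) _ R v, of s]
        mult_right_mono[OF l]]
    by (cases "s \<in> {a<..<b}") auto
  then have "(\<integral>\<^sup>+ s. indicator {a<..<b} s * ennreal ((poly (pderiv R) s)^2) \<partial>lborel) \<le>
    (\<integral>\<^sup>+ s. ennreal (2 * real p^2 / l) * (indicator {a<..<b} s *
      (\<integral>\<^sup>+ t. indicator {a..b} t * ennreal ((v s - v t)^2 / (s - t)^2) \<partial>lborel)) \<partial>lborel)"
    by (rule nn_integral_mono)
  also have "\<dots> = ennreal (2 * real p^2 / l) * (\<integral>\<^sup>+ s. indicator {a<..<b} s *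
      (\<integral>\<^sup>+ t. indicator {a..b} t * ennreal ((v s - v t)^2 / (s - t)^2) \<partial>lborel) \<partial>lborel)"
    by (intro nn_integral_cmult) measurable
  finally show ?thesis .
qed

lemma sum_indicator_mult_le_indicator:
  fixes f :: "'i \<Rightarrow> ennreal"
  assumes "disjoint_family_on A I" "finite I" "\<And>j. j \<in> I \<Longrightarrow> A j \<subseteq> S"
    and "\<And>j. j \<in> I \<Longrightarrow> x \<in> A j \<Longrightarrow> f j \<le> g"
  shows "(\<Sum>j\<in>I. indicator (A j) x * f j) \<le> indicator S x * g"
proof (cases "\<exists>j\<in>I. x \<in> A j")
  case True
  then obtain j where j: "j \<in> I" "x \<in> A j" by blast
  then have "(\<Sum>j\<in>I. indicator (A j) x * f j) = f j"
    using sum_indicator_disjoint_family[OF assms(1) j(2) assms(2) j(1), of f]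
    by (simp add: mult.commute)
  also have "\<dots> \<le> indicator S x * g"
    using assms(3,4) j by (auto simp: indicator_def)
  finally show ?thesis .
qed (auto simp: indicator_def)

locale unit_partition =
  fixes N :: nat and zeta :: "nat \<Rightarrow> real"
  assumes zeta_0 [simp]: "zeta 0 = 0" and zeta_N [simp]: "zeta N = 1"
    and zeta_less: "j < N \<Longrightarrow> zeta j < zeta (Suc j)"
begin

lemma zeta_mono: "j \<le> k \<Longrightarrow> k \<le> N \<Longrightarrow> zeta j \<le> zeta k"
  by (rule lift_Suc_mono_le_ivl[of "{..<N}"]) (auto intro: less_imp_le zeta_less)

lemma cell_subset_unit: "j < N \<Longrightarrow> {zeta j..zeta (Suc j)} \<subseteq> {0..1}"
  using zeta_mono[of 0 j] zeta_mono[of "Suc j" N] by auto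

lemma cell_cover: "t \<in> {0..<1} \<Longrightarrow> \<exists>j<N. t \<in> {zeta j..<zeta (Suc j)}"
proof -
  have "\<exists>j<k. t \<in> {zeta j..<zeta (Suc j)}" if "k \<le> N" "t \<in> {0..<zeta k}" for k
    using that
  proof (induction k)
    case (Suc k)
    then show ?case
      by (cases "t < zeta k") (auto intro: less_SucI)
  qed simp
  then show "t \<in> {0..<1} \<Longrightarrow> ?thesis" by (metis order_refl zeta_N)
qed

lemma disjoint_cells: "disjoint_family_on (\<lambda>j. {zeta j..<zeta (Suc j)}) {..<N}"
  unfolding disjoint_family_on_def
proof (intro ballI impI)
  have "{zeta j..<zeta (Suc j)} \<inter> {zeta k..<zeta (Suc k)} = {}" if "j < k" "k < N" for j k
    using zeta_mono[of "Suc j" k] that by auto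
  then show "{zeta j..<zeta (Suc j)} \<inter> {zeta k..<zeta (Suc k)} = {}"
    if "j \<in> {..<N}" "k \<in> {..<N}" "j \<noteq> k" for j k
    using that by (metis Int_commute lessThan_iff linorder_neqE_nat)
qed

lemma disjoint_open_cells: "disjoint_family_on (\<lambda>j. {zeta j<..<zeta (Suc j)}) {..<N}"
  by (rule disjoint_family_on_bisimulation[OF disjoint_cells]) auto

text \<open>Outside \<open>[0, 1]\<close> the function \<open>u\<close> is arbitrary, possibly non-measurable; a Borel copy is
  needed to interchange sums, constants and integrals.\<close>
lemma measurable_representative:
  assumes "\<And>j t. j < N \<Longrightarrow> t \<in> {zeta j..zeta (Suc j)} \<Longrightarrow> u t = poly (R j) t"
  obtains v where "v \<in> borel_measurable borel" and "\<And>t. t \<in> {0..1} \<Longrightarrow> v t = u t"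
proof
  define v where
    "v t = (\<Sum>j<N. poly (R j) t * indicator {zeta j..<zeta (Suc j)} t) + u 1 * indicator {1} t" for t
  show "v \<in> borel_measurable borel"
    unfolding v_def by measurable
  fix t :: real
  assume t: "t \<in> {0..1}"
  show "v t = u t"
  proof (cases "t = 1")
    case True
    then have "t \<notin> {zeta j..<zeta (Suc j)}" if "j < N" for j
      using cell_subset_unit[OF that] by auto
    with True show ?thesis by (simp add: v_def)
  next
    case False
    then obtain j where j: "j < N" "t \<in> {zeta j..<zeta (Suc j)}"
      using cell_cover[of t] t by auto
    then have "(\<Sum>k<N. poly (R k) t * indicator {zeta k..<zeta (Suc k)} t) = poly (R j) t"
      by (intro sum_indicator_disjoint_family[OF disjoint_cells]) auto
    with j False assms show ?thesis by (simp add: v_def)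
  qed
qed

lemma nn_integral_deriv_sq_le_sum_cells:
  assumes u: "\<And>j t. j < N \<Longrightarrow> t \<in> {zeta j..zeta (Suc j)} \<Longrightarrow> u t = poly (R j) t"
  shows "(\<integral>\<^sup>+ t. indicator {0..1} t * ennreal ((deriv u t)^2) \<partial>lborel) \<le>
    (\<Sum>j<N. \<integral>\<^sup>+ t. indicator {zeta j<..<zeta (Suc j)} t * ennreal ((poly (pderiv (R j)) t)^2) \<partial>lborel)"
proof -
  have "AE t in lborel. \<forall>z\<in>zeta ` {..N}. t \<noteq> z"
    by (intro AE_finite_allI AE_lborel_singleton) auto
  then have "AE t in lborel. indicator {0..1} t * ennreal ((deriv u t)^2) \<le>
      (\<Sum>j<N. indicator {zeta j<..<zeta (Suc j)} t * ennreal ((poly (pderiv (R j)) t)^2))"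
  proof eventually_elim
    case (elim t)
    show ?case
    proof (cases "t \<in> {0..1}")
      case True
      moreover have "t \<noteq> zeta N" using elim by blast
      ultimately obtain j where j: "j < N" "t \<in> {zeta j..<zeta (Suc j)}"
        using cell_cover by fastforce
      moreover have "t \<noteq> zeta j" using elim j(1) by auto
      ultimately have j: "j < N" "t \<in> {zeta j<..<zeta (Suc j)}" by auto
      have "(u has_real_derivative poly (pderiv (R j)) t) (at t)"
        by (rule has_field_derivative_transform_within_open[OF poly_DERIV _ j(2)]) (use u j in auto)
      then have "indicator {0..1} t * ennreal ((deriv u t)^2) =
          indicator {zeta j<..<zeta (Suc j)} t * ennreal ((poly (pderiv (R j)) t)^2)"
        using True j by (simp add: DERIV_imp_deriv)
      also have "\<dots> \<le> (\<Sum>j<N. indicator {zeta j<..<zeta (Suc j)} t * ennreal ((poly (pderiv (R j)) t)^2))"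
        by (rule member_le_sum) (use j in auto)
      finally show ?thesis .
    qed simp
  qed
  then show ?thesis
    by (subst nn_integral_sum[symmetric]) (auto intro: nn_integral_mono_AE)
qed

end

definition piecewise_poly :: "nat \<Rightarrow> real \<Rightarrow> (real \<Rightarrow> real) \<Rightarrow> bool" where
  "piecewise_poly p l u \<longleftrightarrow> (\<exists>N zeta R. unit_partition N zeta \<and>
     (\<forall>j<N. l \<le> zeta (Suc j) - zeta j \<and> degree (R j) \<le> p \<and>
        (\<forall>t\<in>{zeta j..zeta (Suc j)}. u t = poly (R j) t)))"

text \<open>On each cell, \<open>u'(s)\<^sup>2\<close> is bounded by the Gagliardo integrand integrated over that cell
  only, and the cells are disjoint.\<close>
lemma piecewise_poly_deriv_sq_le_gagliardo:
  assumes u: "piecewise_poly p l u" and l: "0 < l" and p: "1 \<le> p"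
  shows "(\<integral>\<^sup>+ t. indicator {0..1} t * ennreal ((deriv u t)^2) \<partial>lborel) \<le>
    ennreal (2 * real p^2 / l) * (\<integral>\<^sup>+ s. \<integral>\<^sup>+ t. indicator {0..1} s * indicator {0..1} t *
       ennreal ((u s - u t)^2 / (s - t)^2) \<partial>lborel \<partial>lborel)"
proof -
  obtain N zeta R where "unit_partition N zeta"
    and cells: "\<And>j. j < N \<Longrightarrow> l \<le> zeta (Suc j) - zeta j \<and> degree (R j) \<le> p"
    and pieces: "\<And>j t. j < N \<Longrightarrow> t \<in> {zeta j..zeta (Suc j)} \<Longrightarrow> u t = poly (R j) t"
    using u unfolding piecewise_poly_def by blast
  interpret unit_partition N zeta by fact
  obtain v where v_measurable [measurable]: "v \<in> borel_measurable borel"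
    and v: "\<And>t. t \<in> {0..1} \<Longrightarrow> v t = u t"
    using measurable_representative[of u R] pieces by blast
  define K where "K = ennreal (2 * real p^2 / l)"
  define G where "G s t = ennreal ((v s - v t)^2 / (s - t)^2)" for s t
  define I where "I A s = (\<integral>\<^sup>+ t. indicator A t * G s t \<partial>lborel)" for A s
  have I_mono: "I A s \<le> I {0..1} s" if "A \<subseteq> {0..1}" for A s
    unfolding I_def using that by (intro nn_integral_mono mult_right_mono) (auto simp: indicator_def)
  have "(\<integral>\<^sup>+ t. indicator {0..1} t * ennreal ((deriv u t)^2) \<partial>lborel) \<le>
      (\<Sum>j<N. \<integral>\<^sup>+ s. indicator {zeta j<..<zeta (Suc j)} s * ennreal ((poly (pderiv (R j)) s)^2) \<partial>lborel)"
    by (rule nn_integral_deriv_sq_le_sum_cells[OF pieces])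
  also have "\<dots> \<le> (\<Sum>j<N. K * \<integral>\<^sup>+ s. indicator {zeta j<..<zeta (Suc j)} s * I {zeta j..zeta (Suc j)} s \<partial>lborel)"
  proof (intro sum_mono)
    fix j assume "j \<in> {..<N}"
    then have j: "j < N" by simp
    have "\<forall>t\<in>{zeta j..zeta (Suc j)}. v t = poly (R j) t"
      using v pieces[OF j] cell_subset_unit[OF j] by auto
    with cells[OF j] zeta_less[OF j]
    show "(\<integral>\<^sup>+ s. indicator {zeta j<..<zeta (Suc j)} s * ennreal ((poly (pderiv (R j)) s)^2) \<partial>lborel)
        \<le> K * \<integral>\<^sup>+ s. indicator {zeta j<..<zeta (Suc j)} s * I {zeta j..zeta (Suc j)} s \<partial>lborel"
      unfolding K_def I_def G_def using l p by (intro nn_integral_pderiv_sq_le_cell) auto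
  qed
  also have "\<dots> = K * \<integral>\<^sup>+ s. (\<Sum>j<N. indicator {zeta j<..<zeta (Suc j)} s * I {zeta j..zeta (Suc j)} s) \<partial>lborel"
    by (subst nn_integral_sum) (auto simp: I_def G_def sum_distrib_left)
  also have "\<dots> \<le> K * \<integral>\<^sup>+ s. indicator {0..1} s * I {0..1} s \<partial>lborel"
  proof (intro mult_left_mono nn_integral_mono sum_indicator_mult_le_indicator)
    show "{zeta j<..<zeta (Suc j)} \<subseteq> {0..1}" if "j \<in> {..<N}" for j
      using cell_subset_unit[of j] that by auto
  qed (use disjoint_open_cells cell_subset_unit I_mono in auto)
  also have "(\<integral>\<^sup>+ s. indicator {0..1} s * I {0..1} s \<partial>lborel) = (\<integral>\<^sup>+ s. \<integral>\<^sup>+ t.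
      indicator {0..1} s * indicator {0..1} t * ennreal ((u s - u t)^2 / (s - t)^2) \<partial>lborel \<partial>lborel)"
    unfolding I_def G_def
    by (intro nn_integral_cong) (auto simp: v nn_integral_cmult_indicator indicator_def intro!: nn_integral_cong)
  finally show ?thesis unfolding K_def .
qed

lemma piecewise_poly_cong:
  assumes "piecewise_poly p l u" "\<And>t. t \<in> {0..1} \<Longrightarrow> u t = v t"
  shows "piecewise_poly p l v"
proof -
  obtain N zeta R where "unit_partition N zeta" and
    cells: "\<forall>j<N. l \<le> zeta (Suc j) - zeta j \<and> degree (R j) \<le> p \<and>
      (\<forall>t\<in>{zeta j..zeta (Suc j)}. u t = poly (R j) t)"
    using assms(1) unfolding piecewise_poly_def by blast
  interpret unit_partition N zeta by fact
  have "v t = poly (R j) t" if "j < N" "t \<in> {zeta j..zeta (Suc j)}" for j t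
    using cells assms(2) cell_subset_unit[OF that(1)] that by auto
  with cells have "\<forall>j<N. l \<le> zeta (Suc j) - zeta j \<and> degree (R j) \<le> p \<and>
      (\<forall>t\<in>{zeta j..zeta (Suc j)}. v t = poly (R j) t)"
    by blast
  then show ?thesis
    unfolding piecewise_poly_def using unit_partition_axioms by blast
qed

lemma piecewise_poly_reflect:
  assumes "piecewise_poly p l u"
  shows "piecewise_poly p l (\<lambda>t. u (1 - t))"
proof -
  obtain N zeta R where "unit_partition N zeta" and
    cells: "\<forall>j<N. l \<le> zeta (Suc j) - zeta j \<and> degree (R j) \<le> p \<and>
      (\<forall>t\<in>{zeta j..zeta (Suc j)}. u t = poly (R j) t)"
    using assms unfolding piecewise_poly_def by blast
  interpret unit_partition N zeta by fact
  define zeta' where "zeta' j = 1 - zeta (N - j)" for j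
  define R' where "R' j = pcompose (R (N - Suc j)) [:1, -1:]" for j
  have "unit_partition N zeta'"
  proof
    show "zeta' j < zeta' (Suc j)" if "j < N" for j
      using zeta_less[of "N - Suc j"] that by (simp add: zeta'_def Suc_diff_Suc)
  qed (simp_all add: zeta'_def)
  moreover have "\<forall>j<N. l \<le> zeta' (Suc j) - zeta' j \<and> degree (R' j) \<le> p \<and>
      (\<forall>t\<in>{zeta' j..zeta' (Suc j)}. u (1 - t) = poly (R' j) t)"
  proof (intro allI impI conjI ballI)
    fix j assume j: "j < N"
    then have k: "N - Suc j < N" "N - j = Suc (N - Suc j)" by auto
    show "l \<le> zeta' (Suc j) - zeta' j" "degree (R' j) \<le> p"
      using cells k by (simp_all add: zeta'_def R'_def degree_pcompose)
    fix t assume "t \<in> {zeta' j..zeta' (Suc j)}"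
    then have "1 - t \<in> {zeta (N - Suc j)..zeta (Suc (N - Suc j))}"
      using k by (auto simp: zeta'_def)
    then show "u (1 - t) = poly (R' j) t"
      using cells k by (auto simp: R'_def poly_pcompose)
  qed
  ultimately show ?thesis
    unfolding piecewise_poly_def by blast
qed

lemma unit_partition_open_knot_vector:
  "open_knot_vector p N z m \<Longrightarrow> unit_partition N z"
  by unfold_locales (auto simp: open_knot_vector_def)

lemma piecewise_poly_spline_combination:
  fixes n :: nat
  assumes knots: "open_knot_vector p N z m" and mesh: "\<forall>i<N. l \<le> z (Suc i) - z i"
    and f: "\<forall>k<n. f k \<in> spline_space p N z m"
  shows "piecewise_poly p l (\<lambda>x. \<Sum>k<n. c k * f k x)"
proof -
  have "\<forall>k\<in>{..<n}. \<exists>Pk. \<forall>i<N. degree (Pk i) \<le> p \<and> (\<forall>x\<in>{z i..z (Suc i)}. f k x = poly (Pk i) x)"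
    using f unfolding spline_space_def by blast
  then obtain P where P: "\<forall>k\<in>{..<n}. \<forall>i<N. degree (P k i) \<le> p \<and> (\<forall>x\<in>{z i..z (Suc i)}. f k x = poly (P k i) x)"
    by (rule bchoice[elim_format]) blast
  define R where "R i = (\<Sum>k<n. smult (c k) (P k i))" for i
  have "degree (R i) \<le> p" if "i < N" for i
    unfolding R_def using P that
    by (intro degree_sum_le order.trans[OF degree_smult_le]) auto
  moreover have "(\<Sum>k<n. c k * f k x) = poly (R i) x" if "i < N" "x \<in> {z i..z (Suc i)}" for i x
    using P that by (simp add: R_def poly_sum)
  ultimately show ?thesis
    unfolding piecewise_poly_def using unit_partition_open_knot_vector[OF knots] mesh by blast
qed

lemma edge_in_bdry: "i < 4 \<Longrightarrow> t \<in> {0..1} \<Longrightarrow> edge i t \<in> bdry"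
  unfolding bdry_def by blast

lemma dist_edge_sq: "(dist (edge i s) (edge i t))^2 = (s - t)^2"
proof -
  have "(1 - s - (1 - t))^2 = (s - t)^2" "(t - s)^2 = (s - t)^2"
    by (simp_all add: power2_eq_square algebra_simps)
  then show ?thesis
    by (simp add: edge_def dist_Pair_Pair dist_real_def)
qed

lemma piecewise_poly_edge_trace:
  assumes w: "w \<in> trace_space p N1 z1 m1 N2 z2 m2"
    and knots: "open_knot_vector p N1 z1 m1" "open_knot_vector p N2 z2 m2"
    and mesh: "\<forall>i<N1. l \<le> z1 (Suc i) - z1 i" "\<forall>i<N2. l \<le> z2 (Suc i) - z2 i"
    and i: "i < 4"
  shows "piecewise_poly p l (\<lambda>t. w (edge i t))"
proof -
  obtain v where v: "v \<in> tp_spline_space p N1 z1 m1 N2 z2 m2" and wv: "\<forall>x\<in>bdry. w x = v x"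
    using w unfolding trace_space_def by blast
  obtain n :: nat and f g where fg: "\<forall>k<n. f k \<in> spline_space p N1 z1 m1 \<and> g k \<in> spline_space p N2 z2 m2"
    and v_sum: "\<forall>x\<in>{0..1}. \<forall>y\<in>{0..1}. v (x, y) = (\<Sum>k<n. f k x * g k y)"
    using v unfolding tp_spline_space_def by blast
  have f: "\<forall>k<n. f k \<in> spline_space p N1 z1 m1" and g: "\<forall>k<n. g k \<in> spline_space p N2 z2 m2"
    using fg by auto
  have trace: "w (edge i t) = (\<Sum>k<n. f k (fst (edge i t)) * g k (snd (edge i t)))" if "t \<in> {0..1}" for t
  proof -
    have "w (edge i t) = v (fst (edge i t), snd (edge i t))"
      using wv edge_in_bdry[OF i that] by simp
    also have "\<dots> = (\<Sum>k<n. f k (fst (edge i t)) * g k (snd (edge i t)))"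
      using v_sum that by (simp add: edge_def)
    finally show ?thesis .
  qed
  consider "i = 0" | "i = 1" | "i = 2" | "i = 3"
    using i by linarith
  then show ?thesis
  proof cases
    case 1
    have "piecewise_poly p l (\<lambda>x. \<Sum>k<n. g k 0 * f k x)"
      by (rule piecewise_poly_spline_combination[OF knots(1) mesh(1) f])
    then show ?thesis
      by (rule piecewise_poly_cong) (use trace in \<open>simp add: 1 edge_def mult.commute\<close>)
  next
    case 2
    have "piecewise_poly p l (\<lambda>y. \<Sum>k<n. f k 1 * g k y)"
      by (rule piecewise_poly_spline_combination[OF knots(2) mesh(2) g])
    then show ?thesis
      by (rule piecewise_poly_cong) (use trace in \<open>simp add: 2 edge_def\<close>)
  next
    case 3
    have "piecewise_poly p l (\<lambda>t. (\<lambda>x. \<Sum>k<n. g k 1 * f k x) (1 - t))"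
      by (rule piecewise_poly_reflect[OF piecewise_poly_spline_combination[OF knots(1) mesh(1) f]])
    then show ?thesis
      by (rule piecewise_poly_cong) (use trace in \<open>simp add: 3 edge_def mult.commute\<close>)
  next
    case 4
    have "piecewise_poly p l (\<lambda>t. (\<lambda>y. \<Sum>k<n. f k 0 * g k y) (1 - t))"
      by (rule piecewise_poly_reflect[OF piecewise_poly_spline_combination[OF knots(2) mesh(2) g]])
    then show ?thesis
      by (rule piecewise_poly_cong) (use trace in \<open>simp add: 4 edge_def\<close>)
  qed
qed

theorem mainTheorem3:
  fixes C3 :: real
  assumes "C3 > 0"
  shows "\<exists>c>0. \<forall>(p::nat) (h::real) N1 z1 m1 N2 z2 m2 w.
     p \<ge> 1 \<and> h > 0 \<and>
     open_knot_vector p N1 z1 m1 \<and> open_knot_vector p N2 z2 m2 \<and>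
     (\<forall>i<N1. C3 * h \<le> z1 (Suc i) - z1 i \<and> z1 (Suc i) - z1 i \<le> h) \<and>
     (\<forall>i<N2. C3 * h \<le> z2 (Suc i) - z2 i \<and> z2 (Suc i) - z2 i \<le> h) \<and>
     w \<in> trace_space p N1 z1 m1 N2 z2 m2
     \<longrightarrow> H1_bdry_sq w \<le> ennreal (c * real p ^ 2 / h) * H12_bdry_sq w"
proof (intro exI[of _ "2 / C3"] conjI allI impI; (elim conjE)?)
  show "2 / C3 > 0" using assms by simp
  fix p :: nat and h :: real and N1 z1 m1 N2 z2 m2 w
  assume p: "1 \<le> p" and h: "0 < h" and knots: "open_knot_vector p N1 z1 m1" "open_knot_vector p N2 z2 m2"
    and mesh1: "\<forall>i<N1. C3 * h \<le> z1 (Suc i) - z1 i \<and> z1 (Suc i) - z1 i \<le> h"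
    and mesh2: "\<forall>i<N2. C3 * h \<le> z2 (Suc i) - z2 i \<and> z2 (Suc i) - z2 i \<le> h"
    and w: "w \<in> trace_space p N1 z1 m1 N2 z2 m2"
  define T where "T i j = (\<integral>\<^sup>+ s. \<integral>\<^sup>+ t. indicator {0..1} s * indicator {0..1} t *
      ennreal ((w (edge i s) - w (edge j t))\<^sup>2 / (dist (edge i s) (edge j t))\<^sup>2) \<partial>lborel \<partial>lborel)" for i j
  define K where "K = ennreal (2 * real p^2 / (C3 * h))"
  have K: "K = ennreal (2 / C3 * real p ^ 2 / h)"
    by (simp add: K_def)
  have l: "0 < C3 * h"
    using assms h by simp
  have mesh: "\<forall>i<N1. C3 * h \<le> z1 (Suc i) - z1 i" "\<forall>i<N2. C3 * h \<le> z2 (Suc i) - z2 i"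
    using mesh1 mesh2 by auto
  have "(\<integral>\<^sup>+ t. indicator {0..1} t * ennreal ((deriv (\<lambda>s. w (edge i s)) t)\<^sup>2) \<partial>lborel) \<le> K * T i i"
    if "i < 4" for i
    using piecewise_poly_deriv_sq_le_gagliardo[OF piecewise_poly_edge_trace[OF w knots mesh that] l p]
    unfolding T_def K_def dist_edge_sq .
  then have "H1_bdry_sq w \<le> (\<Sum>i<4. K * T i i)"
    unfolding H1_bdry_sq_def by (intro sum_mono) auto
  also have "\<dots> \<le> K * (\<Sum>i<4. \<Sum>j<4. T i j)"
    unfolding sum_distrib_left[symmetric] by (intro mult_left_mono sum_mono member_le_sum) auto
  also have "\<dots> = ennreal (2 / C3 * real p ^ 2 / h) * H12_bdry_sq w"
    unfolding H12_bdry_sq_def T_def K ..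
  finally show "H1_bdry_sq w \<le> ennreal (2 / C3 * real p ^ 2 / h) * H12_bdry_sq w" .
qed

end
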